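(* Let $L\ge 3$, $W=(\mathbb{Z}/2\mathbb{Z})^{*L}$, $q\in[\frac{1}{L-1},1]$, $l\ge 2$, $\beta\in\mathbb{C}_q^1[W]\ominus S_1$ and $\gamma\in\mathbb{C}_q^l[W]\ominus S_l$. Then for every $m,n\in\mathbb{N}_0$ there exist real constants $b^{m,n}_{k,j},c^{m,n}_{k,j}$ ($0\le k\le m$, $0\le j\le n$) such that $$h_m\beta h_n=\sum_{k\le m,\,j\le n}b^{m,n}_{k,j}\beta_{k,j},\qquad h_m\gamma h_n=\sum_{k\le m,\,j\le n}c^{m,n}_{k,j}\gamma_{k,j},$$ and such that for $m,n\in\mathbb{N}$, $0\le k\le m$, $0\le j\le n$, $$c^{m,n}_{k,j}=b^{m,n}_{k,j}+b^{m,n}_{k+1,j+1},$$ with the convention $b^{m,n}_{m+1,n+1}=0$ (and more generally $b^{m,n}_{k,j}=0$ when $k>m$ or $j>n$).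
   Context: $W=(\mathbb{Z}/2\mathbb{Z})^{*L}$ is the free product of $L$ copies of $\mathbb{Z}/2\mathbb{Z}$ with canonical generating set $S$ and word length $|\cdot|$. Put $p=\frac{q-1}{q^2}$. $\mathbb{C}_q[W]$ is the $*$-algebra with linear basis $\{T_w\}_{w\in W}$, $T_e=1$, $T_w^*=T_{w^{-1}}$, and $T_sT_w=T_{sw}$ if $|sw|>|w|$, $T_sT_w=T_{sw}+pT_w$ if $|sw|<|w|$ ($s\in S,w\in W$). Elements of $\mathbb{C}_q[W]$ are identified with vectors in $\ell^2(W)$ via $T_w\mapsto\delta_w$. $h_0=1$, $h_m=\sum_{|w|=m}T_w$. For $l\in\mathbb{N}_0$, $q_l$ is the projection onto $\mathrm{span}\{T_w:|w|=l\}$ and $\mathbb{C}_q^l[W]=q_l(\mathbb{C}_q[W])$. $S_l=\mathrm{span}\{q_l(h_1x),q_l(xh_1): x\in\mathbb{C}_q^{l-1}[W]\}$ and $\mathbb{C}_q^l[W]\ominus S_l$ is the orthogonal complement of $S_l$ in $\mathbb{C}_q^l[W]$ in $\ell^2(W)$. For $\gamma\in\mathbb{C}_q^l[W]$ and $m,n\in\mathbb{N}_0$, $\gamma_{m,n}=q_{m+n+l}(h_m\gamma h_n)$. *)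

theory Defs
  imports Complex_Main
begin

text \<open>Elements of W = (Z/2Z)^{*L} are represented by reduced words: lists over the
generators 0..L-1 with no two consecutive letters equal. The empty list is the identity,
and the word length is the list length.\<close>

definition reduced :: "nat \<Rightarrow> nat list \<Rightarrow> bool" where
  "reduced L w \<longleftrightarrow> set w \<subseteq> {..<L} \<and> (\<forall>i. Suc i < length w \<longrightarrow> w ! i \<noteq> w ! Suc i)"

text \<open>Elements of C_q[W], as finitely supported vectors in l^2(W) (T_w identified with delta_w).\<close>

definition hecke :: "nat \<Rightarrow> (nat list \<Rightarrow> complex) set" where
  "hecke L = {x. finite {w. x w \<noteq> 0} \<and> (\<forall>w. x w \<noteq> 0 \<longrightarrow> reduced L w)}"

definition pq :: "real \<Rightarrow> real" where
  "pq q = (q - 1) / q\<^sup>2"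

text \<open>Left multiplication by T_s: T_s T_w = T_{sw} if |sw| > |w|, and T_{sw} + p T_w otherwise.\<close>

definition lmul_gen :: "nat \<Rightarrow> real \<Rightarrow> nat \<Rightarrow> (nat list \<Rightarrow> complex) \<Rightarrow> (nat list \<Rightarrow> complex)" where
  "lmul_gen L q s x = (\<lambda>v. if reduced L v then
      (if v \<noteq> [] \<and> hd v = s then x (tl v) + complex_of_real (pq q) * x v else x (s # v))
    else 0)"

definition lmul_word :: "nat \<Rightarrow> real \<Rightarrow> nat list \<Rightarrow> (nat list \<Rightarrow> complex) \<Rightarrow> (nat list \<Rightarrow> complex)" where
  "lmul_word L q w x = foldr (lmul_gen L q) w x"

definition hmult :: "nat \<Rightarrow> real \<Rightarrow> (nat list \<Rightarrow> complex) \<Rightarrow> (nat list \<Rightarrow> complex) \<Rightarrow> (nat list \<Rightarrow> complex)" where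
  "hmult L q x y = (\<lambda>v. \<Sum>w\<in>{w. x w \<noteq> 0}. x w * lmul_word L q w y v)"

definition hsum :: "nat \<Rightarrow> nat \<Rightarrow> (nat list \<Rightarrow> complex)" where
  "hsum L m = (\<lambda>w. if reduced L w \<and> length w = m then 1 else 0)"

definition proj_len :: "nat \<Rightarrow> (nat list \<Rightarrow> complex) \<Rightarrow> (nat list \<Rightarrow> complex)" where
  "proj_len l x = (\<lambda>w. if length w = l then x w else 0)"

definition hecke_l :: "nat \<Rightarrow> nat \<Rightarrow> (nat list \<Rightarrow> complex) set" where
  "hecke_l L l = proj_len l ` hecke L"

definition l2_inner :: "(nat list \<Rightarrow> complex) \<Rightarrow> (nat list \<Rightarrow> complex) \<Rightarrow> complex" where
  "l2_inner x y = (\<Sum>w\<in>{w. x w \<noteq> 0}. x w * cnj (y w))"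

definition cspan :: "(nat list \<Rightarrow> complex) set \<Rightarrow> (nat list \<Rightarrow> complex) set" where
  "cspan A = {x. \<exists>t r. finite t \<and> t \<subseteq> A \<and> x = (\<lambda>v. \<Sum>a\<in>t. r a * a v)}"

definition S_sp :: "nat \<Rightarrow> real \<Rightarrow> nat \<Rightarrow> (nat list \<Rightarrow> complex) set" where
  "S_sp L q l = cspan ({proj_len l (hmult L q (hsum L 1) x) | x. x \<in> hecke_l L (l - 1)}
                   \<union> {proj_len l (hmult L q x (hsum L 1)) | x. x \<in> hecke_l L (l - 1)})"

definition ominus :: "(nat list \<Rightarrow> complex) set \<Rightarrow> (nat list \<Rightarrow> complex) set \<Rightarrow> (nat list \<Rightarrow> complex) set" where
  "ominus V A = {x \<in> V. \<forall>y\<in>A. l2_inner x y = 0}"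

definition gmn :: "nat \<Rightarrow> real \<Rightarrow> nat \<Rightarrow> (nat list \<Rightarrow> complex) \<Rightarrow> nat \<Rightarrow> nat \<Rightarrow> (nat list \<Rightarrow> complex)" where
  "gmn L q l g m n = proj_len (m + n + l) (hmult L q (hmult L q (hsum L m) g) (hsum L n))"

end

theory Submission
  imports Defs
begin

text \<open>
  Left and right multiplication by \<open>h\<^sub>1\<close> act on the vectors \<open>\<gamma>\<^sub>k\<^sub>,\<^sub>j\<close> by the three-term rule
  \<open>h\<^sub>1\<gamma>\<^sub>k\<^sub>,\<^sub>j = \<gamma>\<^sub>k\<^sub>+\<^sub>1\<^sub>,\<^sub>j + p\<gamma>\<^sub>k\<^sub>,\<^sub>j + (L - 1)\<gamma>\<^sub>k\<^sub>-\<^sub>1\<^sub>,\<^sub>j\<close>; the term \<open>\<gamma>\<^sub>k\<^sub>-\<^sub>1\<^sub>,\<^sub>j\<close> has the right coefficient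
  because orthogonality to \<open>S\<^sub>l\<close> makes the sums of \<open>\<gamma>\<close> over all one-letter extensions of a word vanish.
  The \<open>h\<^sub>m\<close> obey a recursion of the same shape, \<open>h\<^sub>1h\<^sub>m\<^sub>+\<^sub>1 = h\<^sub>m\<^sub>+\<^sub>2 + p h\<^sub>m\<^sub>+\<^sub>1 + c\<^sub>m h\<^sub>m\<close>, so
  \<open>h\<^sub>m\<gamma>h\<^sub>n = \<Sum> A\<^sub>m\<^sub>,\<^sub>k A\<^sub>n\<^sub>,\<^sub>j \<gamma>\<^sub>k\<^sub>,\<^sub>j\<close> with coefficients independent of \<open>\<gamma>\<close>.
  For \<open>l = 1\<close> the rule for \<open>\<beta>\<^sub>0\<^sub>,\<^sub>j\<close> has the extra term \<open>-\<beta>\<^sub>0\<^sub>,\<^sub>j\<^sub>-\<^sub>1\<close> instead, but the alternating sums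
  \<open>\<beta>\<^sub>k\<^sub>,\<^sub>j - \<beta>\<^sub>k\<^sub>-\<^sub>1\<^sub>,\<^sub>j\<^sub>-\<^sub>1 + \<beta>\<^sub>k\<^sub>-\<^sub>2\<^sub>,\<^sub>j\<^sub>-\<^sub>2 - \<dots>\<close> obey the clean rule; expanding them back gives coefficients
  \<open>b\<close> with \<open>A\<^sub>m\<^sub>,\<^sub>kA\<^sub>n\<^sub>,\<^sub>j = b\<^sub>k\<^sub>,\<^sub>j + b\<^sub>k\<^sub>+\<^sub>1\<^sub>,\<^sub>j\<^sub>+\<^sub>1\<close>.
\<close>

section \<open>Reduced words\<close>

lemma reduced_iff_successively:
  "reduced L w \<longleftrightarrow> set w \<subseteq> {..<L} \<and> successively (\<noteq>) w"
  unfolding reduced_def successively_conv_nth by simp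

lemma reduced_Nil [simp]: "reduced L []"
  by (simp add: reduced_iff_successively)

lemma reduced_Cons: "reduced L (s # w) \<longleftrightarrow> s < L \<and> reduced L w \<and> (w = [] \<or> s \<noteq> hd w)"
  by (auto simp: reduced_iff_successively successively_Cons)

lemma reduced_append:
  "reduced L (u @ w) \<longleftrightarrow> reduced L u \<and> reduced L w \<and> (u = [] \<or> w = [] \<or> last u \<noteq> hd w)"
  by (auto simp: reduced_iff_successively successively_append_iff)

lemma reduced_rev [simp]: "reduced L (rev w) \<longleftrightarrow> reduced L w"
proof -
  have "successively (\<lambda>x y. y \<noteq> x) w = successively (\<noteq>) w"
    by (rule successively_cong) auto
  then show ?thesis by (auto simp: reduced_iff_successively)
qed

lemma card_reduced_Cons:
  assumes "reduced L w"
  shows "card {s\<in>{..<L}. reduced L (s # w)} = (if w = [] then L else L - 1)"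
proof (cases w)
  case (Cons a u)
  then have "{s\<in>{..<L}. reduced L (s # w)} = {..<L} - {a}" and "a < L"
    using assms by (auto simp: reduced_Cons)
  then show ?thesis using Cons by simp
qed (simp add: reduced_Cons)

definition words :: "nat \<Rightarrow> nat \<Rightarrow> nat list set" where
  "words L m = {w. reduced L w \<and> length w = m}"

lemma finite_words [simp]: "finite (words L m)"
proof -
  have "words L m \<subseteq> {w. set w \<subseteq> {..<L} \<and> length w = m}"
    by (auto simp: words_def reduced_def)
  then show ?thesis using finite_lists_length_eq[of "{..<L}" m] finite_subset by blast
qed

lemma words_0 [simp]: "words L 0 = {[]}"
  by (auto simp: words_def)

lemma sum_words_Suc:
  "(\<Sum>u\<in>words L (Suc m). g u) = (\<Sum>w\<in>words L m. \<Sum>s\<in>{s\<in>{..<L}. reduced L (s # w)}. g (s # w))"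
proof -
  have "words L (Suc m) = (\<lambda>(w, s). s # w) ` Sigma (words L m) (\<lambda>w. {s\<in>{..<L}. reduced L (s # w)})"
    by (auto simp: words_def reduced_Cons image_iff length_Suc_conv)
  moreover have "inj_on (\<lambda>(w, s). s # w) (Sigma (words L m) (\<lambda>w. {s\<in>{..<L}. reduced L (s # w)}))"
    by (auto simp: inj_on_def)
  ultimately show ?thesis
    by (simp add: sum.reindex sum.Sigma split_def)
qed

definition branch :: "nat \<Rightarrow> nat \<Rightarrow> complex" where
  "branch L m = (if m = 0 then of_nat L else of_nat L - 1)"

lemma sum_words_Suc_tl:
  "(\<Sum>u\<in>words L (Suc m). g (tl u)) = branch L m * (\<Sum>w\<in>words L m. g w)"
proof -
  have "(\<Sum>s\<in>{s\<in>{..<L}. reduced L (s # w)}. g w) = branch L m * g w" if "w \<in> words L m" for w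
  proof (cases m)
    case (Suc k)
    with that obtain a u where "w = a # u" "a < L"
      by (auto simp: words_def reduced_Cons length_Suc_conv)
    with that Suc show ?thesis
      using card_reduced_Cons[of L w] by (simp add: words_def branch_def of_nat_diff)
  qed (use that card_reduced_Cons[of L w] in \<open>simp add: words_def branch_def\<close>)
  then show ?thesis
    unfolding sum_words_Suc sum_distrib_left list.sel by (rule sum.cong[OF refl])
qed

type_synonym vec = "nat list \<Rightarrow> complex"

definition lin_op :: "(vec \<Rightarrow> vec) \<Rightarrow> bool" where
  "lin_op f \<longleftrightarrow> (\<forall>x y. f (\<lambda>v. x v + y v) = (\<lambda>v. f x v + f y v)) \<and> (\<forall>c x. f (\<lambda>v. c * x v) = (\<lambda>v. c * f x v))"

lemma lin_op_add: "lin_op f \<Longrightarrow> f (\<lambda>v. x v + y v) = (\<lambda>v. f x v + f y v)"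
  by (simp add: lin_op_def)

lemma lin_op_scale: "lin_op f \<Longrightarrow> f (\<lambda>v. c * x v) = (\<lambda>v. c * f x v)"
  by (simp add: lin_op_def)

lemma lin_op_diff: "lin_op f \<Longrightarrow> f (\<lambda>v. x v - y v) = (\<lambda>v. f x v - f y v)"
  using lin_op_add[of f x "\<lambda>v. (-1) * y v"] lin_op_scale[of f "-1" y] by simp

lemma lin_op_sum:
  assumes "lin_op f" "finite I"
  shows "f (\<lambda>v. \<Sum>i\<in>I. g i v) = (\<lambda>v. \<Sum>i\<in>I. f (g i) v)"
  using assms(2)
proof (induction I rule: finite_induct)
  case empty
  then show ?case using lin_op_scale[OF assms(1), of 0 "\<lambda>v. 0"] by simp
next
  case (insert a I)
  then show ?case by (simp add: lin_op_add[OF assms(1)])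
qed

lemma lin_op_comp: "lin_op f \<Longrightarrow> lin_op g \<Longrightarrow> lin_op (\<lambda>x. f (g x))"
  by (simp add: lin_op_def)

lemma lin_op_id: "lin_op (\<lambda>x. x)"
  by (simp add: lin_op_def)

lemma lin_op_sum_ops: "finite I \<Longrightarrow> (\<And>u. u \<in> I \<Longrightarrow> lin_op (F u)) \<Longrightarrow> lin_op (\<lambda>y v. \<Sum>u\<in>I. F u y v)"
  unfolding lin_op_def by (auto simp: sum.distrib sum_distrib_left fun_eq_iff)

definition supp_reduced :: "nat \<Rightarrow> vec \<Rightarrow> bool" where
  "supp_reduced L x \<longleftrightarrow> (\<forall>v. \<not> reduced L v \<longrightarrow> x v = 0)"

definition delta_vec :: "nat list \<Rightarrow> vec" where
  "delta_vec u = (\<lambda>v. if v = u then 1 else 0)"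

definition rev_vec :: "vec \<Rightarrow> vec" where
  "rev_vec x = (\<lambda>w. x (rev w))"

lemma rev_vec_rev_vec [simp]: "rev_vec (rev_vec x) = x"
  by (simp add: rev_vec_def)

lemma rev_vec_apply: "rev_vec x w = x (rev w)"
  by (simp add: rev_vec_def)

lemma rev_vec_diff: "rev_vec (\<lambda>v. x v - y v) = (\<lambda>v. rev_vec x v - rev_vec y v)"
  by (simp add: rev_vec_def)

lemma supp_reduced_rev_vec: "supp_reduced L x \<Longrightarrow> supp_reduced L (rev_vec x)"
  by (simp add: supp_reduced_def rev_vec_def)

lemma supp_reduced_hecke: "x \<in> hecke L \<Longrightarrow> supp_reduced L x"
  by (auto simp: supp_reduced_def hecke_def)

definition rmul_gen :: "nat \<Rightarrow> real \<Rightarrow> nat \<Rightarrow> vec \<Rightarrow> vec" where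
  "rmul_gen L q t x = rev_vec (lmul_gen L q t (rev_vec x))"

lemma lmul_gen_apply:
  "lmul_gen L q s x v = (if reduced L v then
      (if v \<noteq> [] \<and> hd v = s then x (tl v) + complex_of_real (pq q) * x v else x (s # v)) else 0)"
  by (simp add: lmul_gen_def)

lemma rmul_gen_apply:
  "rmul_gen L q t x v = (if reduced L v then
      (if v \<noteq> [] \<and> last v = t then x (butlast v) + complex_of_real (pq q) * x v else x (v @ [t])) else 0)"
  by (simp add: rmul_gen_def rev_vec_def lmul_gen_def hd_rev butlast_rev[symmetric])

lemma lin_op_lmul_gen: "lin_op (lmul_gen L q s)"
  unfolding lin_op_def by (auto simp: lmul_gen_def fun_eq_iff algebra_simps)

lemma lin_op_rmul_gen: "lin_op (rmul_gen L q t)"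
  unfolding lin_op_def by (simp add: rmul_gen_def rev_vec_def lmul_gen_def fun_eq_iff algebra_simps)

lemma supp_reduced_lmul_gen: "supp_reduced L (lmul_gen L q s x)"
  by (simp add: supp_reduced_def lmul_gen_def)

lemma lmul_gen_rmul_gen_commute:
  assumes "s < L" "t < L"
  shows "lmul_gen L q s (rmul_gen L q t x) = rmul_gen L q t (lmul_gen L q s x)"
proof
  fix v :: "nat list"
  show "lmul_gen L q s (rmul_gen L q t x) v = rmul_gen L q t (lmul_gen L q s x) v"
  proof (cases "reduced L v")
    case True
    consider "v = []" | a where "v = [a]" | a w b where "v = a # w @ [b]"
      by (metis list.exhaust rev_exhaust append_Nil)
    then show ?thesis
      using assms True
      by cases (auto simp: lmul_gen_apply rmul_gen_apply reduced_Cons reduced_append butlast_append algebra_simps)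
  qed (simp add: lmul_gen_apply rmul_gen_apply)
qed

lemma lmul_gen_twice:
  assumes "supp_reduced L x" "s < L"
  shows "lmul_gen L q s (lmul_gen L q s x) = (\<lambda>v. x v + complex_of_real (pq q) * lmul_gen L q s x v)"
proof
  fix v
  show "lmul_gen L q s (lmul_gen L q s x) v = x v + complex_of_real (pq q) * lmul_gen L q s x v"
  proof (cases "reduced L v")
    case True
    then show ?thesis
      using assms by (cases v) (auto simp: lmul_gen_apply reduced_Cons algebra_simps)
  qed (use assms in \<open>simp add: lmul_gen_apply supp_reduced_def\<close>)
qed

lemma hecke_lmul_gen:
  assumes "x \<in> hecke L"
  shows "lmul_gen L q s x \<in> hecke L"
proof -
  let ?X = "{w. x w \<noteq> 0}"
  have "{v. lmul_gen L q s x v \<noteq> 0} \<subseteq> ?X \<union> tl ` ?X \<union> (#) s ` ?X"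
  proof
    fix v assume "v \<in> {v. lmul_gen L q s x v \<noteq> 0}"
    then show "v \<in> ?X \<union> tl ` ?X \<union> (#) s ` ?X"
      by (cases v) (auto simp: lmul_gen_apply split: if_splits intro: image_eqI[of _ tl "s # v"])
  qed
  moreover have "finite ?X" using assms by (simp add: hecke_def)
  ultimately show ?thesis
    using supp_reduced_lmul_gen[of L q s x]
    by (auto simp: hecke_def supp_reduced_def intro: finite_subset)
qed

definition rmul_word :: "nat \<Rightarrow> real \<Rightarrow> nat list \<Rightarrow> vec \<Rightarrow> vec" where
  "rmul_word L q u x = foldr (rmul_gen L q) u x"

lemma lmul_word_Nil [simp]: "lmul_word L q [] x = x"
  by (simp add: lmul_word_def)

lemma lmul_word_Cons [simp]: "lmul_word L q (s # u) x = lmul_gen L q s (lmul_word L q u x)"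
  by (simp add: lmul_word_def)

lemma rmul_word_Nil [simp]: "rmul_word L q [] x = x"
  by (simp add: rmul_word_def)

lemma rmul_word_Cons [simp]: "rmul_word L q (s # u) x = rmul_gen L q s (rmul_word L q u x)"
  by (simp add: rmul_word_def)

lemma lin_op_lmul_word: "lin_op (lmul_word L q u)"
  by (induction u) (auto simp: lin_op_id intro: lin_op_comp[OF lin_op_lmul_gen])

lemma lin_op_rmul_word: "lin_op (rmul_word L q u)"
  by (induction u) (auto simp: lin_op_id intro: lin_op_comp[OF lin_op_rmul_gen])

lemma lmul_word_rev_vec: "lmul_word L q u (rev_vec x) = rev_vec (rmul_word L q u x)"
  by (induction u) (simp_all add: rmul_gen_def)

lemma lmul_word_rmul_word_commute:
  assumes "set u \<subseteq> {..<L}" "set w \<subseteq> {..<L}"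
  shows "lmul_word L q u (rmul_word L q w x) = rmul_word L q w (lmul_word L q u x)"
proof -
  have "lmul_word L q u (rmul_gen L q t y) = rmul_gen L q t (lmul_word L q u y)" if "t < L" for t y
    using assms(1) that by (induction u) (auto simp: lmul_gen_rmul_gen_commute)
  then show ?thesis using assms(2) by (induction w) auto
qed

lemma supp_reduced_lmul_word: "supp_reduced L x \<Longrightarrow> supp_reduced L (lmul_word L q u x)"
  by (cases u) (simp_all add: supp_reduced_lmul_gen)

lemma hecke_lmul_word: "x \<in> hecke L \<Longrightarrow> lmul_word L q u x \<in> hecke L"
  by (induction u) (auto simp: hecke_lmul_gen)

lemma lmul_word_delta_Nil: "reduced L u \<Longrightarrow> lmul_word L q u (delta_vec []) = delta_vec u"
proof (induction u)
  case (Cons s u)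
  show ?case
  proof
    fix v
    show "lmul_word L q (s # u) (delta_vec []) v = delta_vec (s # u) v"
      using Cons by (cases v) (auto simp: lmul_gen_apply delta_vec_def reduced_Cons)
  qed
qed simp

definition lmul_h :: "nat \<Rightarrow> real \<Rightarrow> nat \<Rightarrow> vec \<Rightarrow> vec" where
  "lmul_h L q m y = (\<lambda>v. \<Sum>u\<in>words L m. lmul_word L q u y v)"

definition rmul_h :: "nat \<Rightarrow> real \<Rightarrow> nat \<Rightarrow> vec \<Rightarrow> vec" where
  "rmul_h L q n y = (\<lambda>v. \<Sum>u\<in>words L n. rmul_word L q u y v)"

lemma lin_op_lmul_h: "lin_op (lmul_h L q m)"
  unfolding lmul_h_def by (rule lin_op_sum_ops[OF finite_words lin_op_lmul_word])

lemma lin_op_rmul_h: "lin_op (rmul_h L q n)"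
  unfolding rmul_h_def by (rule lin_op_sum_ops[OF finite_words lin_op_rmul_word])

lemma rmul_h_eq_rev_vec: "rmul_h L q n y = rev_vec (lmul_h L q n (rev_vec y))"
  by (simp add: rmul_h_def lmul_h_def lmul_word_rev_vec) (simp add: rev_vec_def)

lemma lmul_h_0 [simp]: "lmul_h L q 0 y = y"
  by (simp add: lmul_h_def)

lemma rmul_h_0 [simp]: "rmul_h L q 0 y = y"
  by (simp add: rmul_h_def)

lemma lmul_h_1: "lmul_h L q 1 y = (\<lambda>v. \<Sum>s<L. lmul_gen L q s y v)"
proof -
  have "{s\<in>{..<L}. reduced L [s]} = {..<L}" by (auto simp: reduced_Cons)
  then show ?thesis
    unfolding lmul_h_def One_nat_def sum_words_Suc words_0 by simp
qed

lemma supp_reduced_lmul_h: "supp_reduced L y \<Longrightarrow> supp_reduced L (lmul_h L q m y)"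
  using supp_reduced_lmul_word[of L y q] by (simp add: supp_reduced_def lmul_h_def)

lemma supp_reduced_lmul_h_1: "supp_reduced L (lmul_h L q 1 y)"
  using supp_reduced_lmul_gen[of L q _ y] unfolding lmul_h_1 supp_reduced_def by simp

lemma words_subset_lists: "w \<in> words L m \<Longrightarrow> set w \<subseteq> {..<L}"
  by (auto simp: words_def reduced_def)

lemma lmul_word_rmul_h_commute:
  "set u \<subseteq> {..<L} \<Longrightarrow> lmul_word L q u (rmul_h L q n y) = rmul_h L q n (lmul_word L q u y)"
  unfolding rmul_h_def
  by (simp add: lin_op_sum[OF lin_op_lmul_word] lmul_word_rmul_word_commute words_subset_lists)

lemma lmul_h_rmul_h_commute: "lmul_h L q m (rmul_h L q n y) = rmul_h L q n (lmul_h L q m y)"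
  unfolding lmul_h_def[of L q m]
  by (simp add: lmul_word_rmul_h_commute words_subset_lists lin_op_sum[OF lin_op_rmul_h])

text \<open>The recursion \<open>h\<^sub>1 h\<^sub>m\<^sub>+\<^sub>1 = h\<^sub>m\<^sub>+\<^sub>2 + p h\<^sub>m\<^sub>+\<^sub>1 + c\<^sub>m h\<^sub>m\<close>: among the products \<open>T\<^sub>s T\<^sub>u\<close> with
  \<open>|u| = m + 1\<close>, the reduced ones give \<open>h\<^sub>m\<^sub>+\<^sub>2\<close> and \<open>s = hd u\<close> gives \<open>T\<^sub>t\<^sub>l \<^sub>u + p T\<^sub>u\<close>.\<close>

lemma lmul_h_Suc_Suc:
  assumes "supp_reduced L y"
  shows "lmul_h L q (Suc (Suc m)) y = (\<lambda>v. lmul_h L q 1 (lmul_h L q (Suc m) y) v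
           - complex_of_real (pq q) * lmul_h L q (Suc m) y v - branch L m * lmul_h L q m y v)"
proof
  fix v
  let ?p = "complex_of_real (pq q)"
  let ?T = "\<lambda>u. lmul_word L q u y v"
  let ?R = "\<lambda>u. {s\<in>{..<L}. reduced L (s # u)}"
  have split: "(\<Sum>s<L. ?T (s # u)) = (\<Sum>s\<in>?R u. ?T (s # u)) + (?T (tl u) + ?p * ?T u)"
    if "u \<in> words L (Suc m)" for u
  proof -
    from that obtain a w where u: "u = a # w" "a < L" "reduced L u"
      by (auto simp: words_def reduced_Cons length_Suc_conv)
    then have "{..<L} = insert a (?R u)" "a \<notin> ?R u"
      by (auto simp: reduced_Cons)
    then have "(\<Sum>s<L. ?T (s # u)) = ?T (a # u) + (\<Sum>s\<in>?R u. ?T (s # u))"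
      by (metis (no_types, lifting) finite_lessThan finite_insert sum.insert)
    also have "?T (a # u) = ?T (tl u) + ?p * ?T u"
      using lmul_gen_twice[OF supp_reduced_lmul_word[OF assms, of q w] \<open>a < L\<close>, of q] u
      by (simp add: fun_eq_iff)
    finally show ?thesis by simp
  qed
  have "lmul_h L q 1 (lmul_h L q (Suc m) y) v = (\<Sum>u\<in>words L (Suc m). \<Sum>s<L. ?T (s # u))"
    unfolding lmul_h_1 unfolding lmul_h_def
    by (simp add: lin_op_sum[OF lin_op_lmul_gen]) (rule sum.swap)
  also have "\<dots> = (\<Sum>u\<in>words L (Suc m). \<Sum>s\<in>?R u. ?T (s # u))
      + ((\<Sum>u\<in>words L (Suc m). ?T (tl u)) + ?p * (\<Sum>u\<in>words L (Suc m). ?T u))"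
    by (simp only: split sum.distrib sum_distrib_left cong: sum.cong)
  also have "(\<Sum>u\<in>words L (Suc m). \<Sum>s\<in>?R u. ?T (s # u)) = lmul_h L q (Suc (Suc m)) y v"
    unfolding lmul_h_def sum_words_Suc[of _ _ "Suc m"] ..
  also have "(\<Sum>u\<in>words L (Suc m). ?T (tl u)) = branch L m * lmul_h L q m y v"
    unfolding lmul_h_def by (rule sum_words_Suc_tl)
  finally show "lmul_h L q (Suc (Suc m)) y v = lmul_h L q 1 (lmul_h L q (Suc m) y) v
           - ?p * lmul_h L q (Suc m) y v - branch L m * lmul_h L q m y v"
    by (simp add: lmul_h_def)
qed

lemma hmult_hsum_left: "hmult L q (hsum L m) y = lmul_h L q m y"
proof -
  have "{w. hsum L m w \<noteq> 0} = words L m" by (auto simp: hsum_def words_def)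
  then show ?thesis by (simp add: hmult_def lmul_h_def hsum_def words_def)
qed

lemma hecke_lmul_h: "y \<in> hecke L \<Longrightarrow> lmul_h L q m y \<in> hecke L"
proof -
  assume y: "y \<in> hecke L"
  have "{v. lmul_h L q m y v \<noteq> 0} \<subseteq> (\<Union>u\<in>words L m. {v. lmul_word L q u y v \<noteq> 0})"
    by (auto simp: lmul_h_def elim: sum.not_neutral_contains_not_neutral)
  moreover have "finite (\<Union>u\<in>words L m. {v. lmul_word L q u y v \<noteq> 0})"
    using hecke_lmul_word[OF y] by (auto simp: hecke_def)
  ultimately show ?thesis
    using supp_reduced_lmul_h[OF supp_reduced_hecke[OF y], of q m]
    unfolding hecke_def supp_reduced_def by (blast intro: finite_subset)
qed

lemma hsum_eq_rmul_h_delta: "hsum L n = rmul_h L q n (delta_vec [])"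
proof -
  have "lmul_h L q n (delta_vec []) v = hsum L n v" for v
  proof -
    have "lmul_h L q n (delta_vec []) v = (\<Sum>u\<in>words L n. delta_vec u v)"
      unfolding lmul_h_def by (rule sum.cong) (simp_all add: words_def lmul_word_delta_Nil)
    also have "\<dots> = (if v \<in> words L n then 1 else 0)"
      unfolding delta_vec_def eq_commute[of v] by (rule sum.delta[OF finite_words])
    finally show ?thesis by (simp add: hsum_def words_def)
  qed
  then have "lmul_h L q n (delta_vec []) = hsum L n" ..
  moreover have "rev_vec (delta_vec []) = delta_vec []" "rev_vec (hsum L n) = hsum L n"
    by (auto simp: rev_vec_def delta_vec_def hsum_def)
  ultimately show ?thesis by (metis rmul_h_eq_rev_vec)
qed

lemma hmult_hsum_right:
  assumes "x \<in> hecke L"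
  shows "hmult L q x (hsum L n) = rmul_h L q n x"
proof -
  let ?X = "{w. x w \<noteq> 0}"
  have fin: "finite ?X" and red: "\<And>w. w \<in> ?X \<Longrightarrow> reduced L w"
    using assms by (auto simp: hecke_def)
  have "lmul_word L q w (hsum L n) = rmul_h L q n (delta_vec w)" if "w \<in> ?X" for w
    using red[OF that]
    by (simp add: hsum_eq_rmul_h_delta[of _ _ q] lmul_word_rmul_h_commute reduced_def lmul_word_delta_Nil)
  then have "hmult L q x (hsum L n) = rmul_h L q n (\<lambda>v. \<Sum>w\<in>?X. x w * delta_vec w v)"
    by (simp add: hmult_def lin_op_sum[OF lin_op_rmul_h fin] lin_op_scale[OF lin_op_rmul_h])
  also have "(\<lambda>v. \<Sum>w\<in>?X. x w * delta_vec w v) = x"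
  proof
    fix v
    have "(\<Sum>w\<in>?X. x w * delta_vec w v) = (\<Sum>w\<in>?X. if w = v then x v else 0)"
      by (rule sum.cong) (auto simp: delta_vec_def)
    then show "(\<Sum>w\<in>?X. x w * delta_vec w v) = x v"
      by (simp add: sum.delta[OF fin])
  qed
  finally show ?thesis .
qed

lemma hmult_hsum_both:
  "y \<in> hecke L \<Longrightarrow> hmult L q (hmult L q (hsum L m) y) (hsum L n) = rmul_h L q n (lmul_h L q m y)"
  by (simp add: hmult_hsum_left hmult_hsum_right hecke_lmul_h)

lemma rmul_h_Suc_Suc:
  assumes "supp_reduced L y"
  shows "rmul_h L q (Suc (Suc m)) y = (\<lambda>v. rmul_h L q 1 (rmul_h L q (Suc m) y) v
           - complex_of_real (pq q) * rmul_h L q (Suc m) y v - branch L m * rmul_h L q m y v)"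
  using lmul_h_Suc_Suc[OF supp_reduced_rev_vec[OF assms], of q m]
  by (simp add: rmul_h_eq_rev_vec) (simp add: rev_vec_def)

section \<open>Three-term recursions\<close>

definition tridiagonal :: "(vec \<Rightarrow> vec) \<Rightarrow> complex \<Rightarrow> complex \<Rightarrow> (nat \<Rightarrow> vec) \<Rightarrow> bool" where
  "tridiagonal H p c Y \<longleftrightarrow>
     (\<forall>k. H (Y k) = (\<lambda>v. Y (Suc k) v + p * Y k v + (if 0 < k then c * Y (k - 1) v else 0)))"

text \<open>\<open>hcoef p L m k\<close> is the coefficient of \<open>Y\<^sub>k\<close> in \<open>h\<^sub>m Y\<^sub>0\<close> when \<open>h\<^sub>1\<close> acts tridiagonally on \<open>Y\<close>;
  its recursion is that of \<open>lmul_h_Suc_Suc\<close>.\<close>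

fun hcoef :: "real \<Rightarrow> real \<Rightarrow> nat \<Rightarrow> nat \<Rightarrow> real" where
  "hcoef p L 0 k = (if k = 0 then 1 else 0)"
| "hcoef p L (Suc 0) k = (if k = 1 then 1 else if k = 0 then p else 0)"
| "hcoef p L (Suc (Suc m)) k = (if 0 < k then hcoef p L (Suc m) (k - 1) else 0)
      + (L - 1) * hcoef p L (Suc m) (Suc k) - (if m = 0 then L else L - 1) * hcoef p L m k"

lemma hcoef_eq_0: "m < k \<Longrightarrow> hcoef p L m k = 0"
  by (induction p L m k rule: hcoef.induct) auto

lemma hcoef_diag: "hcoef p L m m = 1"
proof (induction m rule: less_induct)
  case (less m)
  consider "m = 0" | "m = Suc 0" | k where "m = Suc (Suc k)"
    by (metis not0_implies_Suc)
  then show ?case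
    by cases (auto simp: hcoef_eq_0 less.IH)
qed

lemma tridiagonal_sum:
  assumes "lin_op H" "tridiagonal H p c Y" and a: "\<And>k. N < k \<Longrightarrow> a k = 0"
  shows "H (\<lambda>v. \<Sum>k\<le>N. a k * Y k v) = (\<lambda>v. \<Sum>k\<le>Suc N.
           ((if 0 < k then a (k - 1) else 0) + p * a k + c * a (Suc k)) * Y k v)"
proof
  fix v
  have up: "(\<Sum>k\<le>N. a k * Y (Suc k) v) = (\<Sum>k\<le>Suc N. (if 0 < k then a (k - 1) else 0) * Y k v)"
    unfolding sum.atMost_Suc_shift[of _ N] by simp
  have down: "(\<Sum>k\<le>N. if 0 < k then c * a k * Y (k - 1) v else 0) = (\<Sum>k\<le>Suc N. c * a (Suc k) * Y k v)"
  proof -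
    have "(\<Sum>k\<le>N. if 0 < k then c * a k * Y (k - 1) v else 0)
        = (\<Sum>k\<le>Suc N. if 0 < k then c * a k * Y (k - 1) v else 0)"
      using a[of "Suc N"] by simp
    also have "\<dots> = (\<Sum>k\<le>N. c * a (Suc k) * Y k v)"
      unfolding sum.atMost_Suc_shift[of _ N] by simp
    also have "\<dots> = (\<Sum>k\<le>Suc N. c * a (Suc k) * Y k v)"
      using a[of "Suc (Suc N)"] by simp
    finally show ?thesis .
  qed
  have "H (\<lambda>v. \<Sum>k\<le>N. a k * Y k v) v = (\<Sum>k\<le>N. a k * H (Y k) v)"
    by (simp add: lin_op_sum[OF assms(1)] lin_op_scale[OF assms(1)])
  also have "\<dots> = (\<Sum>k\<le>N. a k * Y (Suc k) v) + (\<Sum>k\<le>N. p * a k * Y k v)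
       + (\<Sum>k\<le>N. if 0 < k then c * a k * Y (k - 1) v else 0)"
    using assms(2) unfolding tridiagonal_def
    by (simp add: sum.distrib[symmetric] algebra_simps if_distrib cong: if_cong)
  also have "(\<Sum>k\<le>N. p * a k * Y k v) = (\<Sum>k\<le>Suc N. p * a k * Y k v)"
    using a by simp
  also have "(\<Sum>k\<le>N. a k * Y (Suc k) v) + (\<Sum>k\<le>Suc N. p * a k * Y k v)
       + (\<Sum>k\<le>N. if 0 < k then c * a k * Y (k - 1) v else 0)
     = (\<Sum>k\<le>Suc N. ((if 0 < k then a (k - 1) else 0) + p * a k + c * a (Suc k)) * Y k v)"
    unfolding up down sum.distrib[symmetric] by (rule sum.cong) (simp_all add: algebra_simps)
  finally show "H (\<lambda>v. \<Sum>k\<le>N. a k * Y k v) v = (\<Sum>k\<le>Suc N.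
           ((if 0 < k then a (k - 1) else 0) + p * a k + c * a (Suc k)) * Y k v)" .
qed

lemma sum_atMost_extend:
  fixes f :: "nat \<Rightarrow> 'a::comm_monoid_add"
  shows "(\<And>k. m < k \<Longrightarrow> f k = 0) \<Longrightarrow> m \<le> M \<Longrightarrow> (\<Sum>k\<le>m. f k) = (\<Sum>k\<le>M. f k)"
  by (rule sum.mono_neutral_left) auto

lemma three_term_expansion:
  fixes S Y :: "nat \<Rightarrow> vec" and p :: real
  assumes H: "lin_op H" "tridiagonal H (of_real p) (of_nat L - 1) Y"
    and S0: "S 0 = Y 0" and S1: "S 1 = H (Y 0)"
    and S: "\<And>m. S (Suc (Suc m)) = (\<lambda>v. H (S (Suc m)) v - of_real p * S (Suc m) v - branch L m * S m v)"
  shows "S m = (\<lambda>v. \<Sum>k\<le>m. of_real (hcoef p (real L) m k) * Y k v)"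
proof -
  let ?A = "\<lambda>m k. complex_of_real (hcoef p (real L) m k)"
  have ext: "(\<Sum>k\<le>m. ?A m k * Y k v) = (\<Sum>k\<le>M. ?A m k * Y k v)" if "m \<le> M" for m M v
    using that by (intro sum_atMost_extend) (simp_all add: hcoef_eq_0)
  have "S m = (\<lambda>v. \<Sum>k\<le>m. ?A m k * Y k v) \<and> S (Suc m) = (\<lambda>v. \<Sum>k\<le>Suc m. ?A (Suc m) k * Y k v)"
  proof (induction m)
    case 0
    then show ?case
      using S0 S1 H(2) by (simp add: tridiagonal_def fun_eq_iff)
  next
    case (Suc m)
    then have IH: "S m = (\<lambda>v. \<Sum>k\<le>m. ?A m k * Y k v)" "S (Suc m) = (\<lambda>v. \<Sum>k\<le>Suc m. ?A (Suc m) k * Y k v)"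
      by auto
    let ?F = "\<lambda>k. (if 0 < k then ?A (Suc m) (k - 1) else 0) + of_real p * ?A (Suc m) k
                 + (of_nat L - 1) * ?A (Suc m) (Suc k)"
    have HS: "H (\<lambda>v. \<Sum>k\<le>Suc m. ?A (Suc m) k * Y k v) = (\<lambda>v. \<Sum>k\<le>Suc (Suc m). ?F k * Y k v)"
      by (rule tridiagonal_sum[OF H]) (simp add: hcoef_eq_0)
    have coef: "?F k - of_real p * ?A (Suc m) k - branch L m * ?A m k = ?A (Suc (Suc m)) k" for k
      by (simp add: branch_def algebra_simps)
    have "S (Suc (Suc m)) v = (\<Sum>k\<le>Suc (Suc m). ?A (Suc (Suc m)) k * Y k v)" for v
    proof -
      have "S (Suc (Suc m)) v = (\<Sum>k\<le>Suc (Suc m). ?F k * Y k v)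
          - of_real p * (\<Sum>k\<le>Suc m. ?A (Suc m) k * Y k v) - branch L m * (\<Sum>k\<le>m. ?A m k * Y k v)"
        unfolding S IH HS ..
      also have "\<dots> = (\<Sum>k\<le>Suc (Suc m). ?F k * Y k v)
          - of_real p * (\<Sum>k\<le>Suc (Suc m). ?A (Suc m) k * Y k v)
          - branch L m * (\<Sum>k\<le>Suc (Suc m). ?A m k * Y k v)"
        by (simp only: ext[of "Suc m" "Suc (Suc m)"] ext[of m "Suc (Suc m)"] le_SucI order_refl)
      also have "\<dots> = (\<Sum>k\<le>Suc (Suc m). (?F k - of_real p * ?A (Suc m) k - branch L m * ?A m k) * Y k v)"
        by (simp only: sum_distrib_left sum_subtractf[symmetric] left_diff_distrib mult.assoc)
      finally show ?thesis by (simp only: coef)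
    qed
    with IH show ?case by auto
  qed
  then show ?thesis by simp
qed

definition ladder :: "nat \<Rightarrow> real \<Rightarrow> (nat \<Rightarrow> nat \<Rightarrow> vec) \<Rightarrow> bool" where
  "ladder L q X \<longleftrightarrow>
     (\<forall>j. tridiagonal (lmul_h L q 1) (of_real (pq q)) (of_nat L - 1) (\<lambda>k. X k j)) \<and>
     (\<forall>k. tridiagonal (rmul_h L q 1) (of_real (pq q)) (of_nat L - 1) (X k))"

lemma two_sided_expansion:
  assumes X: "ladder L q X" "\<And>k j. supp_reduced L (X k j)"
  shows "rmul_h L q n (lmul_h L q m (X 0 0)) = (\<lambda>v. \<Sum>k\<le>m. \<Sum>j\<le>n.
           of_real (hcoef (pq q) L m k * hcoef (pq q) L n j) * X k j v)"
proof -
  let ?A = "hcoef (pq q) (real L)"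
  let ?Z = "\<lambda>j. lmul_h L q m (X 0 j)"
  have Z: "?Z j = (\<lambda>v. \<Sum>k\<le>m. of_real (?A m k) * X k j v)" for j
    by (rule three_term_expansion[where H = "lmul_h L q 1"])
      (use X in \<open>simp_all add: lin_op_lmul_h ladder_def lmul_h_Suc_Suc\<close>)
  have "tridiagonal (rmul_h L q 1) (of_real (pq q)) (of_nat L - 1) ?Z"
    unfolding tridiagonal_def
  proof
    fix j
    have "rmul_h L q 1 (?Z j) = lmul_h L q m (rmul_h L q 1 (X 0 j))"
      by (rule lmul_h_rmul_h_commute[symmetric])
    also have "\<dots> = lmul_h L q m (\<lambda>v. X 0 (Suc j) v + of_real (pq q) * X 0 j v
        + (if 0 < j then (of_nat L - 1) * X 0 (j - 1) v else 0))"
      using X(1) by (simp add: ladder_def tridiagonal_def)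
    finally show "rmul_h L q 1 (?Z j) = (\<lambda>v. ?Z (Suc j) v + of_real (pq q) * ?Z j v
        + (if 0 < j then (of_nat L - 1) * ?Z (j - 1) v else 0))"
      by (cases j) (simp_all add: lin_op_add[OF lin_op_lmul_h] lin_op_scale[OF lin_op_lmul_h])
  qed
  then have "rmul_h L q n (?Z 0) = (\<lambda>v. \<Sum>j\<le>n. of_real (?A n j) * ?Z j v)"
    by (intro three_term_expansion[where H = "rmul_h L q 1"])
      (simp_all add: lin_op_rmul_h rmul_h_Suc_Suc supp_reduced_lmul_h X(2))
  then show ?thesis
    by (simp add: Z sum_distrib_left sum.swap[of _ "{..n}"] mult_ac)
qed

section \<open>Sandwich vectors\<close>

text \<open>From here on \<open>1 :: nat\<close> is kept as it is, so that rules about \<open>lmul_h L q 1\<close> and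
  \<open>sandwich L 1\<close> still match after simplification.\<close>

declare One_nat_def [simp del]


lemma lmul_h_1_apply:
  assumes "supp_reduced L z" "reduced L v"
  shows "lmul_h L q 1 z v = (if v = [] then 0 else z (tl v) + complex_of_real (pq q) * z v) + (\<Sum>s<L. z (s # v))"
proof (cases v)
  case (Cons a w)
  have "a < L" using assms(2) Cons by (simp add: reduced_Cons)
  have "z (a # v) = 0" using assms Cons by (simp add: supp_reduced_def reduced_Cons)
  have "lmul_h L q 1 z v = (\<Sum>s<L. (if s = a then z w + complex_of_real (pq q) * z v else 0) + z (s # v))"
    unfolding lmul_h_1 using assms(2) Cons \<open>z (a # v) = 0\<close>
    by (intro sum.cong) (auto simp: lmul_gen_apply)
  then show ?thesis
    using \<open>a < L\<close> Cons by (simp add: sum.distrib)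
qed (unfold lmul_h_1, simp add: lmul_gen_apply)

text \<open>The paper's \<open>\<gamma>\<^sub>k\<^sub>,\<^sub>j\<close>, see \<open>gmn_eq_sandwich\<close>.\<close>

definition sandwich :: "nat \<Rightarrow> nat \<Rightarrow> vec \<Rightarrow> nat \<Rightarrow> nat \<Rightarrow> vec" where
  "sandwich L l y k j = (\<lambda>w. if reduced L w \<and> length w = k + j + l then y (take l (drop k w)) else 0)"

definition boundary_free :: "nat \<Rightarrow> nat \<Rightarrow> vec \<Rightarrow> bool" where
  "boundary_free L l y \<longleftrightarrow> supp_reduced L y \<and> (\<forall>w. length w \<noteq> l \<longrightarrow> y w = 0)
     \<and> (\<forall>u. length u = l - 1 \<longrightarrow> (\<Sum>s<L. y (s # u)) = 0)
     \<and> (\<forall>u. length u = l - 1 \<longrightarrow> (\<Sum>s<L. y (u @ [s])) = 0)"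

lemma supp_reduced_sandwich: "supp_reduced L (sandwich L l y k j)"
  by (simp add: supp_reduced_def sandwich_def)

lemma sandwich_0_0: "boundary_free L l y \<Longrightarrow> sandwich L l y 0 0 = y"
  by (auto simp: sandwich_def boundary_free_def supp_reduced_def fun_eq_iff)

lemma sandwich_eq_0: "length v \<noteq> k + j + l \<Longrightarrow> sandwich L l y k j v = 0"
  by (simp add: sandwich_def)

lemma rev_vec_sandwich: "rev_vec (sandwich L l y k j) = sandwich L l (rev_vec y) j k"
  by (auto simp: rev_vec_def sandwich_def fun_eq_iff rev_take rev_drop drop_take min_def)

lemma boundary_free_rev_vec: "boundary_free L l y \<Longrightarrow> boundary_free L l (rev_vec y)"
  unfolding boundary_free_def
  by (auto simp: supp_reduced_rev_vec) (auto simp: rev_vec_def dest: spec[of _ "rev _"])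

lemma sum_sandwich_Cons_Suc:
  assumes "reduced L v" "1 \<le> l"
  shows "(\<Sum>s<L. sandwich L l y (Suc k) j (s # v)) = (of_nat L - 1) * sandwich L l y k j v"
proof (cases "length v = k + j + l")
  case True
  then have "v \<noteq> []" using assms(2) by auto
  then obtain a w where v: "v = a # w" "a < L" using assms(1) by (cases v) (auto simp: reduced_Cons)
  have "(\<Sum>s<L. sandwich L l y (Suc k) j (s # v)) = (\<Sum>s<L. if reduced L (s # v) then y (take l (drop k v)) else 0)"
    using True by (intro sum.cong) (auto simp: sandwich_def)
  also have "\<dots> = of_nat (card {s\<in>{..<L}. reduced L (s # v)}) * y (take l (drop k v))"
    by (simp add: sum.inter_filter[symmetric])
  also have "\<dots> = (of_nat L - 1) * sandwich L l y k j v"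
    using card_reduced_Cons[OF assms(1)] True assms(1) v by (simp add: sandwich_def of_nat_diff)
  finally show ?thesis .
qed (simp add: sandwich_def)

lemma sum_sandwich_Cons_0:
  assumes y: "boundary_free L l y" and v: "reduced L v" and "2 \<le> l"
  shows "(\<Sum>s<L. sandwich L l y 0 j (s # v)) = 0"
proof (cases "Suc (length v) = j + l")
  case True
  then have "v \<noteq> []" "take (l - 1) v \<noteq> []" "length (take (l - 1) v) = l - 1"
    using \<open>2 \<le> l\<close> by auto
  have "sandwich L l y 0 j (s # v) = y (s # take (l - 1) v)" if "s < L" for s
  proof (cases "reduced L (s # v)")
    case False
    then have "\<not> reduced L (s # take (l - 1) v)"
      using \<open>v \<noteq> []\<close> \<open>take (l - 1) v \<noteq> []\<close> v that by (cases v) (auto simp: reduced_Cons)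
    then show ?thesis
      using False y by (simp add: sandwich_def boundary_free_def supp_reduced_def)
  qed (use True \<open>2 \<le> l\<close> in \<open>simp add: sandwich_def take_Cons'\<close>)
  then have "(\<Sum>s<L. sandwich L l y 0 j (s # v)) = (\<Sum>s<L. y (s # take (l - 1) v))"
    by (intro sum.cong) simp_all
  also have "\<dots> = 0"
    using y \<open>length (take (l - 1) v) = l - 1\<close> by (simp add: boundary_free_def)
  finally show ?thesis .
qed (simp add: sandwich_def)

text \<open>For \<open>l = 1\<close> the missing term \<open>s = hd v\<close> survives and produces the correction.\<close>

lemma sum_sandwich_Cons_0_1:
  assumes y: "boundary_free L 1 y" and v: "reduced L v"
  shows "(\<Sum>s<L. sandwich L 1 y 0 j (s # v)) = (if 0 < j then - sandwich L 1 y 0 (j - 1) v else 0)"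
proof (cases "length v = j")
  case True
  have total: "(\<Sum>s<L. y [s]) = 0"
    using y by (simp add: boundary_free_def)
  show ?thesis
  proof (cases v)
    case Nil
    then show ?thesis using True total by (simp add: sandwich_def reduced_Cons)
  next
    case (Cons a w)
    then have "a < L" using v by (simp add: reduced_Cons)
    have "(\<Sum>s<L. y [s]) = (\<Sum>s<L. sandwich L 1 y 0 j (s # v) + (if s = a then y [a] else 0))"
      using True Cons v by (intro sum.cong) (auto simp: sandwich_def reduced_Cons One_nat_def)
    then have "(\<Sum>s<L. sandwich L 1 y 0 j (s # v)) = - y [a]"
      using total \<open>a < L\<close> by (simp add: sum.distrib eq_neg_iff_add_eq_0)
    then show ?thesis
      using True Cons v by (simp add: sandwich_def One_nat_def)
  qed
qed (auto simp: sandwich_def)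

lemma lmul_h_1_sandwich:
  assumes y: "boundary_free L l y" and "1 \<le> l"
  shows "lmul_h L q 1 (sandwich L l y k j) = (\<lambda>v. sandwich L l y (Suc k) j v
     + complex_of_real (pq q) * sandwich L l y k j v
     + (if 0 < k then (of_nat L - 1) * sandwich L l y (k - 1) j v
        else if l = 1 \<and> 0 < j then - sandwich L l y 0 (j - 1) v else 0))"
proof
  fix v
  show "lmul_h L q 1 (sandwich L l y k j) v = sandwich L l y (Suc k) j v
     + complex_of_real (pq q) * sandwich L l y k j v
     + (if 0 < k then (of_nat L - 1) * sandwich L l y (k - 1) j v
        else if l = 1 \<and> 0 < j then - sandwich L l y 0 (j - 1) v else 0)"
  proof (cases "reduced L v")
    case True
    have "lmul_h L q 1 (sandwich L l y k j) v
        = (if v = [] then 0 else sandwich L l y k j (tl v) + complex_of_real (pq q) * sandwich L l y k j v)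
          + (\<Sum>s<L. sandwich L l y k j (s # v))"
      by (rule lmul_h_1_apply[OF supp_reduced_sandwich True])
    also have "(if v = [] then 0 else sandwich L l y k j (tl v) + complex_of_real (pq q) * sandwich L l y k j v)
        = sandwich L l y (Suc k) j v + complex_of_real (pq q) * sandwich L l y k j v"
      using True \<open>1 \<le> l\<close> by (cases v) (auto simp: sandwich_def reduced_Cons)
    finally have H: "lmul_h L q 1 (sandwich L l y k j) v = sandwich L l y (Suc k) j v
        + complex_of_real (pq q) * sandwich L l y k j v + (\<Sum>s<L. sandwich L l y k j (s # v))" .
    consider k' where "k = Suc k'" | "k = 0" "2 \<le> l" | "k = 0" "l = 1"
      using \<open>1 \<le> l\<close> by (cases k; cases "l = 1") auto
    then show ?thesis
    proof cases
      case 1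
      then show ?thesis
        using H sum_sandwich_Cons_Suc[OF True \<open>1 \<le> l\<close>] by simp
    next
      case 2
      then show ?thesis
        using H sum_sandwich_Cons_0[OF y True] by simp
    next
      case 3
      then show ?thesis
        using H sum_sandwich_Cons_0_1[OF _ True] y by simp
    qed
  next
    case False
    then have "lmul_h L q 1 (sandwich L l y k j) v = 0"
      using supp_reduced_lmul_h_1 by (simp add: supp_reduced_def)
    with False show ?thesis by (simp add: sandwich_def)
  qed
qed

lemma rmul_h_1_sandwich:
  assumes "boundary_free L l y" "1 \<le> l"
  shows "rmul_h L q 1 (sandwich L l y k j) = (\<lambda>v. sandwich L l y k (Suc j) v
     + complex_of_real (pq q) * sandwich L l y k j v
     + (if 0 < j then (of_nat L - 1) * sandwich L l y k (j - 1) v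
        else if l = 1 \<and> 0 < k then - sandwich L l y (k - 1) 0 v else 0))"
proof -
  have rev: "sandwich L l' (rev_vec y) a b (rev w) = sandwich L l' y b a w" for l' a b w
    using fun_cong[OF rev_vec_sandwich[of L l' y b a], of "rev w"] by (simp add: rev_vec_apply)
  show ?thesis
    unfolding rmul_h_eq_rev_vec[of L q 1] rev_vec_sandwich lmul_h_1_sandwich[OF boundary_free_rev_vec[OF assms(1)] assms(2)]
    by (auto simp: fun_eq_iff rev_vec_apply rev)
qed

lemma ladder_sandwich:
  assumes "boundary_free L l y" "2 \<le> l"
  shows "ladder L q (sandwich L l y)"
proof -
  have "1 \<le> l" "l \<noteq> 1" using assms(2) by auto
  then show ?thesis
    unfolding ladder_def tridiagonal_def
    by (simp add: lmul_h_1_sandwich[OF assms(1) \<open>1 \<le> l\<close>] rmul_h_1_sandwich[OF assms(1) \<open>1 \<le> l\<close>]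
        cong: if_cong)
qed

lemma sum_atMost_atMost_single:
  fixes f :: "nat \<Rightarrow> nat \<Rightarrow> 'a::comm_monoid_add"
  assumes "\<And>k j. k \<le> m \<Longrightarrow> j \<le> n \<Longrightarrow> (k, j) \<noteq> (m, n) \<Longrightarrow> f k j = 0"
  shows "(\<Sum>k\<le>m. \<Sum>j\<le>n. f k j) = f m n"
proof -
  have "(\<Sum>k\<le>m. \<Sum>j\<le>n. f k j) = (\<Sum>(k, j)\<in>{..m} \<times> {..n}. f k j)"
    by (simp add: sum.cartesian_product)
  also have "\<dots> = (\<Sum>(k, j)\<in>{(m, n)}. f k j)"
    by (rule sum.mono_neutral_right) (auto intro: assms)
  finally show ?thesis by simp
qed

lemma gmn_eq_sandwich:
  assumes y: "y \<in> hecke L" and X: "ladder L q X" "\<And>k j. supp_reduced L (X k j)" "X 0 0 = y"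
    and below: "\<And>k j v. k + j + l < length v \<Longrightarrow> X k j v = 0"
    and top: "\<And>k j v. length v = k + j + l \<Longrightarrow> X k j v = sandwich L l y k j v"
  shows "gmn L q l y m n = sandwich L l y m n"
proof
  fix v
  let ?A = "hcoef (pq q) (real L)"
  show "gmn L q l y m n v = sandwich L l y m n v"
  proof (cases "length v = m + n + l")
    case True
    have "gmn L q l y m n v = (\<Sum>k\<le>m. \<Sum>j\<le>n. of_real (?A m k * ?A n j) * X k j v)"
      using True two_sided_expansion[OF X(1,2), of n m] by (simp add: gmn_def proj_len_def hmult_hsum_both[OF y] X(3))
    also have "\<dots> = of_real (?A m m * ?A n n) * X m n v"
      using True by (intro sum_atMost_atMost_single) (auto intro!: below)
    finally show ?thesis
      using True by (simp add: hcoef_diag top)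
  qed (simp add: gmn_def proj_len_def sandwich_eq_0)
qed

section \<open>Orthogonality to \<open>S\<^sub>l\<close>\<close>

lemma lmul_h_1_delta:
  assumes "reduced L u" "reduced L w" "length w = Suc (length u)"
  shows "lmul_h L q 1 (delta_vec u) w = (if tl w = u then 1 else 0)"
proof -
  have "supp_reduced L (delta_vec u)"
    using assms(1) by (auto simp: supp_reduced_def delta_vec_def)
  moreover have "s # w \<noteq> u" for s
    using assms(3) by (auto dest: arg_cong[of _ _ length])
  ultimately show ?thesis
    using assms(3) by (auto simp: lmul_h_1_apply[OF _ assms(2)] delta_vec_def)
qed

lemma rmul_h_1_delta:
  assumes "reduced L u" "reduced L w" "length w = Suc (length u)"
  shows "rmul_h L q 1 (delta_vec u) w = (if butlast w = u then 1 else 0)"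
proof -
  have "rev_vec (delta_vec u) = delta_vec (rev u)"
    by (auto simp: rev_vec_def delta_vec_def fun_eq_iff)
  then have "rmul_h L q 1 (delta_vec u) w = lmul_h L q 1 (delta_vec (rev u)) (rev w)"
    by (simp add: rmul_h_eq_rev_vec rev_vec_apply)
  also have "\<dots> = (if tl (rev w) = rev u then 1 else 0)"
    using assms by (intro lmul_h_1_delta) simp_all
  finally show ?thesis
    by (metis butlast_rev rev_rev_ident)
qed

lemma delta_vec_hecke: "reduced L u \<Longrightarrow> delta_vec u \<in> hecke L"
  by (auto simp: hecke_def delta_vec_def)

lemma delta_vec_hecke_l: "reduced L u \<Longrightarrow> delta_vec u \<in> hecke_l L (length u)"
proof -
  assume "reduced L u"
  then have "delta_vec u \<in> hecke L"
    by (rule delta_vec_hecke)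
  moreover have "delta_vec u = proj_len (length u) (delta_vec u)"
    by (auto simp: proj_len_def delta_vec_def)
  ultimately show ?thesis
    unfolding hecke_l_def by blast
qed

lemma hecke_lD:
  assumes "y \<in> hecke_l L l"
  shows "y \<in> hecke L" "\<And>w. length w \<noteq> l \<Longrightarrow> y w = 0"
proof -
  obtain x where x: "x \<in> hecke L" "y = proj_len l x"
    using assms by (auto simp: hecke_l_def)
  then have "{w. y w \<noteq> 0} \<subseteq> {w. x w \<noteq> 0}"
    by (auto simp: proj_len_def)
  with x show "y \<in> hecke L"
    by (auto simp: hecke_def proj_len_def intro: finite_subset)
  show "\<And>w. length w \<noteq> l \<Longrightarrow> y w = 0"
    using x by (simp add: proj_len_def)
qed

lemma hecke_ominus_S_sp: "y \<in> ominus (hecke_l L l) (S_sp L q l) \<Longrightarrow> y \<in> hecke L"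
  using hecke_lD(1) by (auto simp: ominus_def)

lemma l2_inner_indicator:
  assumes "finite {w. y w \<noteq> 0}" "finite B" "\<And>w. y w \<noteq> 0 \<Longrightarrow> z w = (if w \<in> B then 1 else 0)"
  shows "l2_inner y z = (\<Sum>w\<in>B. y w)"
proof -
  have "l2_inner y z = (\<Sum>w\<in>{w. y w \<noteq> 0}. if w \<in> B then y w else 0)"
    unfolding l2_inner_def by (rule sum.cong) (simp_all add: assms(3))
  also have "\<dots> = (\<Sum>w\<in>{w. y w \<noteq> 0} \<inter> B. y w)"
    by (rule sum.inter_restrict[OF assms(1), symmetric])
  also have "\<dots> = (\<Sum>w\<in>B. y w)"
    by (rule sum.mono_neutral_left) (use assms(2) in auto)
  finally show ?thesis .
qed

lemma ominus_S_sp_sum_eq_0: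
  assumes y: "y \<in> ominus (hecke_l L l) (S_sp L q l)" and "z \<in> S_sp L q l" "finite B"
    and z: "\<And>w. reduced L w \<Longrightarrow> length w = l \<Longrightarrow> z w = (if w \<in> B then 1 else 0)"
  shows "(\<Sum>w\<in>B. y w) = 0"
proof -
  have yh: "y \<in> hecke L" and yl: "\<And>w. length w \<noteq> l \<Longrightarrow> y w = 0"
    using y hecke_lD(2)[of y L l] by (auto simp: ominus_def hecke_ominus_S_sp)
  have "z w = (if w \<in> B then 1 else 0)" if "y w \<noteq> 0" for w
  proof (rule z)
    show "reduced L w" using that supp_reduced_hecke[OF yh] by (auto simp: supp_reduced_def)
    show "length w = l" using that yl by auto
  qed
  with yh have "l2_inner y z = (\<Sum>w\<in>B. y w)"
    by (intro l2_inner_indicator \<open>finite B\<close>) (simp_all add: hecke_def)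
  moreover have "l2_inner y z = 0"
    using y \<open>z \<in> S_sp L q l\<close> by (simp add: ominus_def)
  ultimately show ?thesis by simp
qed

lemma cspan_superset: "a \<in> A \<Longrightarrow> a \<in> cspan A"
  unfolding cspan_def by (intro CollectI exI[of _ "{a}"] exI[of _ "\<lambda>_. 1"]) simp

lemma S_sp_left:
  "reduced L u \<Longrightarrow> length u = l - 1 \<Longrightarrow> proj_len l (hmult L q (hsum L 1) (delta_vec u)) \<in> S_sp L q l"
  unfolding S_sp_def by (rule cspan_superset) (metis (mono_tags, lifting) UnI1 delta_vec_hecke_l mem_Collect_eq)

lemma S_sp_right:
  "reduced L u \<Longrightarrow> length u = l - 1 \<Longrightarrow> proj_len l (hmult L q (delta_vec u) (hsum L 1)) \<in> S_sp L q l"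
  unfolding S_sp_def by (rule cspan_superset) (metis (mono_tags, lifting) UnI2 delta_vec_hecke_l mem_Collect_eq)

text \<open>Orthogonality to \<open>q\<^sub>l(h\<^sub>1 T\<^sub>u)\<close> and \<open>q\<^sub>l(T\<^sub>u h\<^sub>1)\<close> with \<open>|u| = l - 1\<close> is exactly the
  vanishing of the sums of \<open>y\<close> over the one-letter extensions of \<open>u\<close> on the left and on the right.\<close>

lemma ominus_S_sp_sum_Cons:
  assumes y: "y \<in> ominus (hecke_l L l) (S_sp L q l)" and "1 \<le> l" "length u = l - 1"
  shows "(\<Sum>s<L. y (s # u)) = 0"
proof (cases "reduced L u")
  case True
  have "(\<Sum>w\<in>(\<lambda>s. s # u) ` {..<L}. y w) = 0"
  proof (rule ominus_S_sp_sum_eq_0[OF y S_sp_left[OF True assms(3)]])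
    fix w assume w: "reduced L w" "length w = l"
    then have "w \<in> (\<lambda>s. s # u) ` {..<L} \<longleftrightarrow> tl w = u"
      using \<open>1 \<le> l\<close> by (cases w) (auto simp: reduced_Cons)
    then show "proj_len l (hmult L q (hsum L 1) (delta_vec u)) w = (if w \<in> (\<lambda>s. s # u) ` {..<L} then 1 else 0)"
      using w True assms by (simp add: proj_len_def hmult_hsum_left lmul_h_1_delta)
  qed simp
  then show ?thesis
    by (simp add: sum.reindex inj_on_def)
next
  case False
  have "y \<in> hecke L"
    using y by (rule hecke_ominus_S_sp)
  then have "y (s # u) = 0" for s
    using False supp_reduced_hecke by (auto simp: supp_reduced_def reduced_Cons)
  then show ?thesis by simp
qed

lemma ominus_S_sp_sum_snoc:
  assumes y: "y \<in> ominus (hecke_l L l) (S_sp L q l)" and "1 \<le> l" "length u = l - 1"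
  shows "(\<Sum>s<L. y (u @ [s])) = 0"
proof (cases "reduced L u")
  case True
  have "(\<Sum>w\<in>(\<lambda>s. u @ [s]) ` {..<L}. y w) = 0"
  proof (rule ominus_S_sp_sum_eq_0[OF y S_sp_right[OF True assms(3)]])
    fix w assume w: "reduced L w" "length w = l"
    then have "w \<in> (\<lambda>s. u @ [s]) ` {..<L} \<longleftrightarrow> butlast w = u"
      using \<open>1 \<le> l\<close> by (cases w rule: rev_cases) (auto simp: reduced_append reduced_Cons)
    moreover have "delta_vec u \<in> hecke L"
      using True by (rule delta_vec_hecke)
    ultimately show "proj_len l (hmult L q (delta_vec u) (hsum L 1)) w = (if w \<in> (\<lambda>s. u @ [s]) ` {..<L} then 1 else 0)"
      using w True assms by (simp add: proj_len_def hmult_hsum_right rmul_h_1_delta)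
  qed simp
  then show ?thesis
    by (simp add: sum.reindex inj_on_def)
next
  case False
  have "y \<in> hecke L"
    using y by (rule hecke_ominus_S_sp)
  then have "y (u @ [s]) = 0" for s
    using False supp_reduced_hecke by (auto simp: supp_reduced_def reduced_append)
  then show ?thesis by simp
qed

lemma boundary_free_ominus_S_sp:
  assumes "y \<in> ominus (hecke_l L l) (S_sp L q l)" "1 \<le> l"
  shows "boundary_free L l y"
  unfolding boundary_free_def
  using hecke_ominus_S_sp[OF assms(1)] hecke_lD(2)[of y L l] assms(1)
    ominus_S_sp_sum_Cons[OF assms] ominus_S_sp_sum_snoc[OF assms]
  by (auto simp: supp_reduced_hecke ominus_def)

section \<open>The case \<open>l = 1\<close>\<close>

fun alt_sandwich :: "nat \<Rightarrow> vec \<Rightarrow> nat \<Rightarrow> nat \<Rightarrow> vec" where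
  "alt_sandwich L y 0 j = sandwich L 1 y 0 j"
| "alt_sandwich L y (Suc k) 0 = sandwich L 1 y (Suc k) 0"
| "alt_sandwich L y (Suc k) (Suc j) = (\<lambda>v. sandwich L 1 y (Suc k) (Suc j) v - alt_sandwich L y k j v)"

lemma supp_reduced_alt_sandwich: "supp_reduced L (alt_sandwich L y k j)"
  by (induction L y k j rule: alt_sandwich.induct) (auto simp: sandwich_def supp_reduced_def)

lemma alt_sandwich_0_0: "boundary_free L 1 y \<Longrightarrow> alt_sandwich L y 0 0 = y"
  by (simp add: sandwich_0_0)

lemma alt_sandwich_eq_0: "k + j + 1 < length v \<Longrightarrow> alt_sandwich L y k j v = 0"
  by (induction L y k j rule: alt_sandwich.induct) (auto simp: sandwich_def)

lemma alt_sandwich_top: "length v = k + j + 1 \<Longrightarrow> alt_sandwich L y k j v = sandwich L 1 y k j v"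
  by (induction L y k j rule: alt_sandwich.induct) (auto simp: alt_sandwich_eq_0)

lemma rev_vec_alt_sandwich: "rev_vec (alt_sandwich L y k j) = alt_sandwich L (rev_vec y) j k"
proof (induction L y k j rule: alt_sandwich.induct)
  case (1 L y j)
  then show ?case by (cases j) (simp_all add: rev_vec_sandwich)
next
  case (3 L y k j)
  then show ?case
    unfolding alt_sandwich.simps rev_vec_diff by (simp add: rev_vec_sandwich)
qed (simp add: rev_vec_sandwich)

lemma lmul_h_1_alt_sandwich:
  assumes "boundary_free L 1 y"
  shows "lmul_h L q 1 (alt_sandwich L y k j) = (\<lambda>v. alt_sandwich L y (Suc k) j v
     + complex_of_real (pq q) * alt_sandwich L y k j v
     + (if 0 < k then (of_nat L - 1) * alt_sandwich L y (k - 1) j v else 0))"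
  using assms
proof (induction L y k j rule: alt_sandwich.induct)
  case (1 L y j)
  then show ?case using lmul_h_1_sandwich[OF "1.prems" order_refl, of q 0 j] by (cases j) (simp_all add: fun_eq_iff)
next
  case (2 L y k)
  then show ?case using lmul_h_1_sandwich[OF "2.prems" order_refl, of q "Suc k" 0] by (cases k) (simp_all add: fun_eq_iff)
next
  case (3 L y k j)
  have diff: "lmul_h L q 1 (alt_sandwich L y (Suc k) (Suc j))
      = (\<lambda>v. lmul_h L q 1 (sandwich L 1 y (Suc k) (Suc j)) v - lmul_h L q 1 (alt_sandwich L y k j) v)"
    by (simp only: alt_sandwich.simps lin_op_diff[OF lin_op_lmul_h])
  show ?case
    unfolding diff "3.IH"[OF "3.prems"] lmul_h_1_sandwich[OF "3.prems" order_refl]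
    by (cases k) (simp_all add: fun_eq_iff algebra_simps)
qed

lemma ladder_alt_sandwich:
  assumes "boundary_free L 1 y"
  shows "ladder L q (alt_sandwich L y)"
proof -
  have rev: "alt_sandwich L (rev_vec y) a b (rev w) = alt_sandwich L y b a w" for a b w
    using fun_cong[OF rev_vec_alt_sandwich[of L y b a], of "rev w"] by (simp add: rev_vec_apply)
  have "rmul_h L q 1 (alt_sandwich L y k j) = (\<lambda>v. alt_sandwich L y k (Suc j) v
     + complex_of_real (pq q) * alt_sandwich L y k j v
     + (if 0 < j then (of_nat L - 1) * alt_sandwich L y k (j - 1) v else 0))" for k j
    unfolding rmul_h_eq_rev_vec[of L q 1] rev_vec_alt_sandwich lmul_h_1_alt_sandwich[OF boundary_free_rev_vec[OF assms]]
    by (simp add: fun_eq_iff rev_vec_apply rev)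
  then show ?thesis
    using lmul_h_1_alt_sandwich[OF assms] by (simp add: ladder_def tridiagonal_def)
qed

definition hcoef_pair :: "real \<Rightarrow> real \<Rightarrow> nat \<Rightarrow> nat \<Rightarrow> nat \<Rightarrow> nat \<Rightarrow> real" where
  "hcoef_pair p L m n k j = (if k \<le> m \<and> j \<le> n then hcoef p L m k * hcoef p L n j else 0)"

definition alt_coef :: "nat \<Rightarrow> (nat \<Rightarrow> nat \<Rightarrow> real) \<Rightarrow> nat \<Rightarrow> nat \<Rightarrow> real" where
  "alt_coef m c k j = (\<Sum>i\<le>m. (-1) ^ i * c (k + i) (j + i))"

lemma alt_coef_eq_0:
  assumes "\<And>k j. m < k \<or> n < j \<Longrightarrow> c k j = 0" "m < k \<or> n < j"
  shows "alt_coef m c k j = 0"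
  unfolding alt_coef_def using assms by (intro sum.neutral) auto

lemma alt_coef_add_Suc_Suc:
  assumes "\<And>k j. m < k \<or> n < j \<Longrightarrow> c k j = 0"
  shows "alt_coef m c k j + alt_coef m c (Suc k) (Suc j) = c k j"
proof -
  let ?g = "\<lambda>i. (-1) ^ i * c (k + i) (j + i)"
  have "alt_coef m c k j + alt_coef m c (Suc k) (Suc j) = (\<Sum>i\<le>m. ?g i - ?g (Suc i))"
    by (simp add: alt_coef_def sum.distrib[symmetric] sum_subtractf)
  also have "\<dots> = ?g 0 - ?g (Suc m)"
    by (rule sum_telescope)
  also have "?g (Suc m) = 0"
    using assms[of "k + Suc m" "j + Suc m"] by simp
  finally show ?thesis by simp
qed

lemma sum_atMost_shift_if:
  fixes g :: "nat \<Rightarrow> 'a::comm_monoid_add"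
  shows "g (Suc m) = 0 \<Longrightarrow> (\<Sum>k\<le>m. if 0 < k then g k else 0) = (\<Sum>k\<le>m. g (Suc k))"
  using sum.atMost_Suc_shift[of "\<lambda>k. if 0 < k then g k else 0" m] by simp

text \<open>Summation by parts along diagonals.\<close>

lemma sum_regroup_diagonal:
  fixes E F :: "nat \<Rightarrow> nat \<Rightarrow> complex" and c :: "nat \<Rightarrow> nat \<Rightarrow> real"
  assumes F: "\<And>k j. F k j = E k j - (if 0 < k \<and> 0 < j then F (k - 1) (j - 1) else 0)"
    and c: "\<And>k j. m < k \<or> n < j \<Longrightarrow> c k j = 0"
  shows "(\<Sum>k\<le>m. \<Sum>j\<le>n. of_real (c k j) * F k j) = (\<Sum>k\<le>m. \<Sum>j\<le>n. of_real (alt_coef m c k j) * E k j)"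
proof -
  let ?b = "\<lambda>k j. complex_of_real (alt_coef m c k j)"
  have b0: "?b (Suc m) j = 0" "?b k (Suc n) = 0" for k j
    using alt_coef_eq_0[OF c] by auto
  have "(\<Sum>k\<le>m. \<Sum>j\<le>n. ?b k j * E k j)
      = (\<Sum>k\<le>m. \<Sum>j\<le>n. ?b k j * F k j) + (\<Sum>k\<le>m. \<Sum>j\<le>n. if 0 < k then if 0 < j then ?b k j * F (k - 1) (j - 1) else 0 else 0)"
  proof -
    have "?b k j * E k j = ?b k j * F k j + (if 0 < k then if 0 < j then ?b k j * F (k - 1) (j - 1) else 0 else 0)" for k j
      by (subst F[of k j]) (simp add: algebra_simps)
    then show ?thesis by (simp add: sum.distrib[symmetric])
  qed
  also have "(\<Sum>k\<le>m. \<Sum>j\<le>n. if 0 < k then if 0 < j then ?b k j * F (k - 1) (j - 1) else 0 else 0)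
      = (\<Sum>k\<le>m. \<Sum>j\<le>n. ?b (Suc k) (Suc j) * F k j)"
  proof -
    let ?G = "\<lambda>k j. ?b k j * F (k - 1) (j - 1)"
    have "(\<Sum>k\<le>m. \<Sum>j\<le>n. if 0 < k then if 0 < j then ?G k j else 0 else 0)
        = (\<Sum>k\<le>m. if 0 < k then \<Sum>j\<le>n. if 0 < j then ?G k j else 0 else 0)"
      by (rule sum.cong) simp_all
    also have "\<dots> = (\<Sum>k\<le>m. if 0 < k then \<Sum>j\<le>n. ?G k (Suc j) else 0)"
      by (intro sum.cong refl if_cong sum_atMost_shift_if) (simp_all add: b0)
    also have "\<dots> = (\<Sum>k\<le>m. \<Sum>j\<le>n. ?G (Suc k) (Suc j))"
      by (rule sum_atMost_shift_if) (simp add: b0)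
    finally show ?thesis by simp
  qed
  also have "(\<Sum>k\<le>m. \<Sum>j\<le>n. ?b k j * F k j) + \<dots> = (\<Sum>k\<le>m. \<Sum>j\<le>n. of_real (c k j) * F k j)"
  proof -
    have "?b k j * F k j + ?b (Suc k) (Suc j) * F k j = of_real (c k j) * F k j" for k j
      by (simp only: distrib_right[symmetric] of_real_add[symmetric] alt_coef_add_Suc_Suc[OF c])
    then show ?thesis by (simp add: sum.distrib[symmetric])
  qed
  finally show ?thesis ..
qed

lemma hcoef_pair_eq_0: "m < k \<or> n < j \<Longrightarrow> hcoef_pair p L m n k j = 0"
  by (auto simp: hcoef_pair_def)

lemma hcoef_pair_eq_alt_coef:
  "hcoef_pair p L m n k j = alt_coef m (hcoef_pair p L m n) k j
     + (if k + 1 \<le> m \<and> j + 1 \<le> n then alt_coef m (hcoef_pair p L m n) (k + 1) (j + 1) else 0)"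
proof -
  have "hcoef_pair p L m n k j = alt_coef m (hcoef_pair p L m n) k j + alt_coef m (hcoef_pair p L m n) (Suc k) (Suc j)"
    by (rule alt_coef_add_Suc_Suc[symmetric]) (rule hcoef_pair_eq_0)
  moreover have "alt_coef m (hcoef_pair p L m n) (Suc k) (Suc j) = 0" if "\<not> (k + 1 \<le> m \<and> j + 1 \<le> n)"
    using that by (intro alt_coef_eq_0[of m n]) (auto simp: hcoef_pair_eq_0)
  ultimately show ?thesis
    by (auto simp: Suc_eq_plus1)
qed

lemma hmult_hsum_expansion:
  assumes "\<gamma> \<in> ominus (hecke_l L l) (S_sp L q l)" "2 \<le> l"
  shows "hmult L q (hmult L q (hsum L m) \<gamma>) (hsum L n)
       = (\<lambda>v. \<Sum>k\<le>m. \<Sum>j\<le>n. of_real (hcoef_pair (pq q) L m n k j) * gmn L q l \<gamma> k j v)"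
proof -
  have y: "boundary_free L l \<gamma>" and h: "\<gamma> \<in> hecke L"
    using assms by (simp_all add: boundary_free_ominus_S_sp hecke_ominus_S_sp)
  have X: "ladder L q (sandwich L l \<gamma>)"
    using ladder_sandwich[OF y assms(2)] .
  have "gmn L q l \<gamma> k j = sandwich L l \<gamma> k j" for k j
    by (rule gmn_eq_sandwich[OF h X supp_reduced_sandwich sandwich_0_0[OF y]]) (simp_all add: sandwich_eq_0)
  then show ?thesis
    unfolding hmult_hsum_both[OF h] two_sided_expansion[OF X supp_reduced_sandwich, unfolded sandwich_0_0[OF y]]
    by (intro ext sum.cong refl) (simp add: hcoef_pair_def)
qed

lemma hmult_hsum_expansion_1:
  assumes "\<beta> \<in> ominus (hecke_l L 1) (S_sp L q 1)"
  shows "hmult L q (hmult L q (hsum L m) \<beta>) (hsum L n)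
       = (\<lambda>v. \<Sum>k\<le>m. \<Sum>j\<le>n. of_real (alt_coef m (hcoef_pair (pq q) L m n) k j) * gmn L q 1 \<beta> k j v)"
proof
  fix v
  let ?c = "hcoef_pair (pq q) L m n"
  have y: "boundary_free L 1 \<beta>" and h: "\<beta> \<in> hecke L"
    using assms by (simp_all add: boundary_free_ominus_S_sp hecke_ominus_S_sp)
  have X: "ladder L q (alt_sandwich L \<beta>)"
    using ladder_alt_sandwich[OF y] .
  have "hmult L q (hmult L q (hsum L m) \<beta>) (hsum L n) v
      = (\<Sum>k\<le>m. \<Sum>j\<le>n. of_real (?c k j) * alt_sandwich L \<beta> k j v)"
    unfolding hmult_hsum_both[OF h] two_sided_expansion[OF X supp_reduced_alt_sandwich, unfolded alt_sandwich_0_0[OF y]]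
    by (intro sum.cong refl) (simp add: hcoef_pair_def)
  also have "\<dots> = (\<Sum>k\<le>m. \<Sum>j\<le>n. of_real (alt_coef m ?c k j) * sandwich L 1 \<beta> k j v)"
  proof (rule sum_regroup_diagonal[OF _ hcoef_pair_eq_0])
    show "alt_sandwich L \<beta> k j v = sandwich L 1 \<beta> k j v
        - (if 0 < k \<and> 0 < j then alt_sandwich L \<beta> (k - 1) (j - 1) v else 0)" for k j
      by (cases k; cases j) simp_all
  qed
  also have "\<dots> = (\<Sum>k\<le>m. \<Sum>j\<le>n. of_real (alt_coef m ?c k j) * gmn L q 1 \<beta> k j v)"
    using gmn_eq_sandwich[OF h X supp_reduced_alt_sandwich alt_sandwich_0_0[OF y] alt_sandwich_eq_0 alt_sandwich_top]
    by simp
  finally show "hmult L q (hmult L q (hsum L m) \<beta>) (hsum L n) v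
      = (\<Sum>k\<le>m. \<Sum>j\<le>n. of_real (alt_coef m ?c k j) * gmn L q 1 \<beta> k j v)" .
qed

theorem lemma3p5:
  fixes L l :: nat and q :: real and \<beta> \<gamma> :: "nat list \<Rightarrow> complex"
  assumes "L \<ge> 3"
    and "1 / real (L - 1) \<le> q" and "q \<le> 1"
    and "l \<ge> 2"
    and "\<beta> \<in> ominus (hecke_l L 1) (S_sp L q 1)"
    and "\<gamma> \<in> ominus (hecke_l L l) (S_sp L q l)"
  shows "\<forall>m n. \<exists>b c :: nat \<Rightarrow> nat \<Rightarrow> real.
     hmult L q (hmult L q (hsum L m) \<beta>) (hsum L n)
       = (\<lambda>v. \<Sum>k\<le>m. \<Sum>j\<le>n. complex_of_real (b k j) * gmn L q 1 \<beta> k j v)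
   \<and> hmult L q (hmult L q (hsum L m) \<gamma>) (hsum L n)
       = (\<lambda>v. \<Sum>k\<le>m. \<Sum>j\<le>n. complex_of_real (c k j) * gmn L q l \<gamma> k j v)
   \<and> (1 \<le> m \<and> 1 \<le> n \<longrightarrow>
        (\<forall>k\<le>m. \<forall>j\<le>n. c k j = b k j
             + (if k + 1 \<le> m \<and> j + 1 \<le> n then b (k + 1) (j + 1) else 0)))"
  using hmult_hsum_expansion_1[OF assms(5)] hmult_hsum_expansion[OF assms(6,4)] hcoef_pair_eq_alt_coef
  by blast

end
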